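(* If $G$ is a $2$-free circular interval digraph on $n$ vertices, then $\tilde{P}_3(G) \leq n^3/16$.
   Context: Digraphs are finite, loopless, with at most one edge $uv$ per ordered pair of distinct vertices. A digraph is $2$-free if there are no distinct $u,v$ with both $uv$ and $vu$ edges. A digraph $G$ is a circular interval digraph if its vertices can be arranged in a circle such that for every triple $u,v,w$ of distinct vertices in clockwise order, if $uw \in E(G)$ then $uv, vw \in E(G)$. An induced $3$-vertex directed path is a triple $(a,b,c)$ of distinct vertices with $ab,bc$ edges and neither $ac$ nor $ca$ an edge; $\tilde{P}_3(G)$ is the number of these. *)

theory Defs
  imports Complex_Main
begin

definition digraph :: "'a set \<Rightarrow> ('a \<Rightarrow> 'a \<Rightarrow> bool) \<Rightarrow> bool" where
  "digraph V E \<longleftrightarrow> finite V \<and> (\<forall>u v. E u v \<longrightarrow> u \<in> V \<and> v \<in> V \<and> u \<noteq> v)"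

definition two_free :: "'a set \<Rightarrow> ('a \<Rightarrow> 'a \<Rightarrow> bool) \<Rightarrow> bool" where
  "two_free V E \<longleftrightarrow> (\<forall>u\<in>V. \<forall>v\<in>V. u \<noteq> v \<longrightarrow> \<not> (E u v \<and> E v u))"

definition cyclic_order :: "nat \<Rightarrow> nat \<Rightarrow> nat \<Rightarrow> bool" where
  "cyclic_order i j k \<longleftrightarrow> (i < j \<and> j < k) \<or> (j < k \<and> k < i) \<or> (k < i \<and> i < j)"

text \<open>An arrangement of the vertices on a circle is a bijection pos : V -> {0..<card V};
  clockwise order follows increasing positions (cyclically).\<close>
definition circular_interval_digraph :: "'a set \<Rightarrow> ('a \<Rightarrow> 'a \<Rightarrow> bool) \<Rightarrow> bool" where
  "circular_interval_digraph V E \<longleftrightarrow> digraph V E \<and>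
     (\<exists>pos. bij_betw pos V {0..<card V} \<and>
        (\<forall>u\<in>V. \<forall>v\<in>V. \<forall>w\<in>V. u \<noteq> v \<and> v \<noteq> w \<and> u \<noteq> w \<and>
            cyclic_order (pos u) (pos v) (pos w) \<and> E u w \<longrightarrow> E u v \<and> E v w))"

definition induced_P3 :: "'a set \<Rightarrow> ('a \<Rightarrow> 'a \<Rightarrow> bool) \<Rightarrow> ('a \<times> 'a \<times> 'a) set" where
  "induced_P3 V E = {(a, b, c). a \<in> V \<and> b \<in> V \<and> c \<in> V \<and> a \<noteq> b \<and> b \<noteq> c \<and> a \<noteq> c \<and>
       E a b \<and> E b c \<and> \<not> E a c \<and> \<not> E c a}"

definition P3_count :: "'a set \<Rightarrow> ('a \<Rightarrow> 'a \<Rightarrow> bool) \<Rightarrow> nat" where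
  "P3_count V E = card (induced_P3 V E)"

end

theory Submission
  imports Defs
begin

(* Fix a circular arrangement and write r(v) for the number of vertices other than v that
   are non-adjacent to v.  Since the out- and in-neighbourhoods of every vertex are arcs
   starting/ending at it, there is no induced in-star or out-star; hence every common
   neighbour b of a non-adjacent pair a, c is the middle of an induced path a b c or c b a,
   and exactly one of them by 2-freeness.  Inclusion-exclusion on common neighbourhoods
   turns this into the identity
       2 P3 = n * sum r(v) - 2 * sum r(v)^2 + #(ordered independent triples).
   Each independent triple is assigned to the vertex v opposite its longest arc; the triples
   with apex v inject into lattice points of a triangle whose size is governed by the in- and
   out-degrees of v, and an elementary lattice point count gives a per-vertex bound.  Summing
   8 (n r - 2 r^2) + 8 (lattice count) <= n^2 over all vertices yields 16 P3 <= n^3. *)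

section \<open>Lattice points in a triangle\<close>

(* The lattice points (u,w) with 2u + w <= a and u + 2w <= b; independent triples with a
   fixed apex are encoded by such points. *)
definition tri_pts :: "int \<Rightarrow> int \<Rightarrow> (nat \<times> nat) set" where
  "tri_pts a b = {(u,w). 2 * int u + int w \<le> a \<and> int u + 2 * int w \<le> b}"

definition tri_card :: "int \<Rightarrow> int \<Rightarrow> nat" where
  "tri_card a b = card (tri_pts a b)"

(* Number of points of tri_pts a b lying on one of the two coordinate axes. *)
definition rim :: "int \<Rightarrow> int \<Rightarrow> int" where
  "rim a b = (if a < 0 \<or> b < 0 then 0 else min a (b div 2) + 1 + min (a div 2) b)"

lemma finite_tri_pts: "finite (tri_pts a b)"
proof (rule finite_subset)
  show "tri_pts a b \<subseteq> {0..nat a} \<times> {0..nat b}" unfolding tri_pts_def by auto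
qed simp

lemma tri_card_neg: "a < 0 \<or> b < 0 \<Longrightarrow> tri_card a b = 0"
  unfolding tri_card_def tri_pts_def by (auto intro!: card_eq_0_iff[THEN iffD2])

(* Removing the points on the axes and shifting by (1,1) leaves a triangle shrunk by 3. *)
lemma tri_pts_decomp:
  assumes "0 \<le> a" "0 \<le> b"
  shows "tri_pts a b = (\<lambda>w. (0, w)) ` {0..nat (min a (b div 2))}
                     \<union> (\<lambda>u. (u, 0)) ` {1..nat (min (a div 2) b)}
                     \<union> (\<lambda>(u,w). (Suc u, Suc w)) ` tri_pts (a-3) (b-3)"
    (is "_ = ?B1 \<union> ?B2 \<union> ?C")
proof (intro set_eqI iffI)
  fix x assume x: "x \<in> tri_pts a b"
  obtain u w where xu: "x = (u,w)" by (cases x)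
  consider "u = 0" | "u \<noteq> 0" "w = 0" | u' w' where "u = Suc u'" "w = Suc w'"
    by (metis not0_implies_Suc)
  then show "x \<in> ?B1 \<union> ?B2 \<union> ?C"
  proof cases
    case 1
    then show ?thesis using x assms unfolding xu tri_pts_def by auto
  next
    case 2
    then show ?thesis using x assms unfolding xu tri_pts_def by auto
  next
    case (3 u' w')
    then have "(u',w') \<in> tri_pts (a-3) (b-3)" using x unfolding xu tri_pts_def by auto
    then show ?thesis unfolding xu 3 by force
  qed
next
  fix x assume "x \<in> ?B1 \<union> ?B2 \<union> ?C"
  then show "x \<in> tri_pts a b" unfolding tri_pts_def using assms by auto
qed

lemma tri_card_step: "int (tri_card a b) = rim a b + int (tri_card (a-3) (b-3))"
proof (cases "a < 0 \<or> b < 0")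
  case True
  then show ?thesis using tri_card_neg[of a b] tri_card_neg[of "a-3" "b-3"] unfolding rim_def by auto
next
  case False
  let ?B1 = "(\<lambda>w. (0::nat, w)) ` {0..nat (min a (b div 2))}"
  let ?B2 = "(\<lambda>u. (u, 0::nat)) ` {1..nat (min (a div 2) b)}"
  let ?C = "(\<lambda>(u,w). (Suc u, Suc w)) ` tri_pts (a-3) (b-3)"
  have cB1: "card ?B1 = Suc (nat (min a (b div 2)))" by (subst card_image) (auto simp: inj_on_def)
  have cB2: "card ?B2 = nat (min (a div 2) b)" by (subst card_image) (auto simp: inj_on_def)
  have cC: "card ?C = tri_card (a-3) (b-3)" unfolding tri_card_def
    by (subst card_image) (auto simp: inj_on_def)
  have "tri_card a b = card (?B1 \<union> ?B2 \<union> ?C)"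
    unfolding tri_card_def using tri_pts_decomp[of a b] False by simp
  also have "\<dots> = card ?B1 + card ?B2 + card ?C"
  proof -
    have "?B1 \<inter> ?B2 = {}" "(?B1 \<union> ?B2) \<inter> ?C = {}" by auto
    then show ?thesis by (simp add: card_Un_disjoint finite_tri_pts)
  qed
  finally show ?thesis using cB1 cB2 cC False unfolding rim_def by auto
qed

(* The weighted combination of four shifted lattice counts that bounds the independent
   triples at one apex, and the corresponding combination of rims. *)
definition tri_sum :: "int \<Rightarrow> int \<Rightarrow> int" where
  "tri_sum a b = 2 * int (tri_card a b) + int (tri_card (a-1) b) + int (tri_card a (b-1))
                 + 2 * int (tri_card (a-1) (b-1))"

definition rim_sum :: "int \<Rightarrow> int \<Rightarrow> int" where
  "rim_sum a b = 2 * rim a b + rim (a-1) b + rim a (b-1) + 2 * rim (a-1) (b-1)"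

lemma tri_sum_step: "tri_sum a b = rim_sum a b + tri_sum (a-3) (b-3)"
  unfolding tri_sum_def rim_sum_def
  using tri_card_step[of a b] tri_card_step[of "a-1" b] tri_card_step[of a "b-1"]
    tri_card_step[of "a-1" "b-1"]
  by (simp add: algebra_simps)

lemma tri_sum_neg: "a < 0 \<or> b < 0 \<Longrightarrow> tri_sum a b = 0"
  unfolding tri_sum_def using tri_card_neg by auto

lemma div2_facts: "(2*x - 1) div 2 = x - (1::int)" "(2*x + 1) div 2 = x" "(2*x) div 2 = x"
  "(2*x + 1 - 1) div 2 = x" "(2*x - 1 - 1) div 2 = x - 1"
  by presburger+

(* Each layer removed in the recursion contributes at most 3(a+b) ... *)
lemma rim_sum_large: assumes "3 \<le> a" "3 \<le> b" shows "rim_sum a b \<le> 3 * (a + b)"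
proof -
  obtain x where "a = 2*x \<or> a = 2*x+1" by (metis odd_two_times_div_two_succ even_two_times_div_two)
  moreover obtain y where "b = 2*y \<or> b = 2*y+1" by (metis odd_two_times_div_two_succ even_two_times_div_two)
  ultimately show ?thesis using assms unfolding rim_sum_def rim_def
    by (elim disjE) (simp_all add: min_def div2_facts split: if_splits)
qed

(* ... and the last layer, where one side is at most 2, satisfies the bound on its own. *)
lemma rim_sum_le_18: assumes "0 \<le> a" "a \<le> 2" "0 \<le> b" shows "rim_sum a b \<le> 18"
proof -
  have "a = 0 \<or> a = 1 \<or> a = 2" using assms by arith
  moreover obtain y where "b = 2*y \<or> b = 2*y+1" by (metis odd_two_times_div_two_succ even_two_times_div_two)
  ultimately show ?thesis using assms unfolding rim_sum_def rim_def
    by (elim disjE) (simp_all add: min_def div2_facts split: if_splits)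
qed

lemma rim_sum_small_left: assumes "0 \<le> a" "a \<le> 2" "0 \<le> b" shows "4 * rim_sum a b \<le> (a+b+3)^2"
proof (cases "a + b \<le> 5")
  case True
  then have "b = 0 \<or> b = 1 \<or> b = 2 \<or> b = 3 \<or> b = 4 \<or> b = 5" using assms by auto
  moreover have "a = 0 \<or> a = 1 \<or> a = 2" using assms by arith
  ultimately show ?thesis unfolding rim_sum_def rim_def by (elim disjE) simp_all
next
  case False
  then have "(9::int)^2 \<le> (a+b+3)^2" by (intro power_mono) auto
  then show ?thesis using rim_sum_le_18[OF assms] by simp
qed

lemma rim_sum_small: assumes "0 \<le> a" "0 \<le> b" "min a b \<le> 2" shows "4 * rim_sum a b \<le> (a+b+3)^2"
proof (cases "a \<le> 2")
  case True then show ?thesis using rim_sum_small_left assms by auto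
next
  case False
  have "rim_sum a b = rim_sum b a" unfolding rim_sum_def rim_def by (auto simp: min.commute)
  then show ?thesis using False rim_sum_small_left[of b a] assms by (simp add: add.commute)
qed

(* The lattice count bound, by peeling off rims three units at a time. *)
lemma tri_sum_bound: "4 * tri_sum a b \<le> (a + b + 3)^2"
proof (induction "nat (a + b + 6)" arbitrary: a b rule: less_induct)
  case less
  consider "a < 0 \<or> b < 0" | "\<not> (a < 0 \<or> b < 0)" "min a b \<le> 2" | "3 \<le> a" "3 \<le> b" by linarith
  then show ?case
  proof cases
    case 1 then show ?thesis using tri_sum_neg by simp
  next
    case 2
    have "tri_sum (a-3) (b-3) = 0" using 2 by (intro tri_sum_neg) auto
    then show ?thesis using tri_sum_step[of a b] rim_sum_small[of a b] 2 by simp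
  next
    case 3
    have IH: "4 * tri_sum (a-3) (b-3) \<le> (a + b - 3)^2"
      using less(1)[of "a-3" "b-3"] 3 by (auto simp: algebra_simps)
    have "4 * tri_sum a b \<le> 12*(a+b) + (a+b-3)^2"
      using tri_sum_step[of a b] IH rim_sum_large[OF 3] by (simp add: algebra_simps)
    also have "\<dots> = (a+b+3)^2" by (simp add: power2_eq_square algebra_simps)
    finally show ?thesis .
  qed
qed

(* A finite set of positive naturals closed downwards (within the positives) is an initial
   segment; this is how neighbourhoods are shown to be arcs. *)
lemma downward_closed_eq_interval:
  fixes S :: "nat set"
  assumes fin: "finite S" and pos: "\<And>k. k \<in> S \<Longrightarrow> 1 \<le> k"
    and down: "\<And>k j. k \<in> S \<Longrightarrow> 1 \<le> j \<Longrightarrow> j < k \<Longrightarrow> j \<in> S"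
  shows "S = {1..card S}"
proof (rule card_subset_eq)
  have "k \<le> card S" if k: "k \<in> S" for k
  proof -
    have "{1..k} \<subseteq> S"
    proof
      fix j assume "j \<in> {1..k}"
      then show "j \<in> S" using k down[OF k, of j] by (cases "j = k") auto
    qed
    then have "card {1..k} \<le> card S" by (rule card_mono[OF fin])
    then show ?thesis by simp
  qed
  then show "S \<subseteq> {1..card S}" using pos by auto
qed simp_all

lemma cyclic_order_rotate: "cyclic_order i j k \<Longrightarrow> cyclic_order j k i"
  unfolding cyclic_order_def by auto

lemma cyclic_order_cases:
  "i \<noteq> j \<Longrightarrow> j \<noteq> k \<Longrightarrow> i \<noteq> k \<Longrightarrow> cyclic_order i j k \<or> cyclic_order i k j"
  unfolding cyclic_order_def by arith

lemma card_triples_by_ends: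
  assumes "finite A" "\<And>a c. (a,c) \<in> A \<Longrightarrow> finite (F a c)"
  shows "card {(a,b,c). (a,c) \<in> A \<and> b \<in> F a c} = (\<Sum>(a,c)\<in>A. card (F a c))"
proof -
  have "bij_betw (\<lambda>((a,c),b). (a,b,c)) (Sigma A (\<lambda>(a,c). F a c)) {(a,b,c). (a,c) \<in> A \<and> b \<in> F a c}"
    by (rule bij_betw_byWitness[where f'="\<lambda>(a,b,c). ((a,c),b)"]) auto
  then have "card {(a,b,c). (a,c) \<in> A \<and> b \<in> F a c} = card (Sigma A (\<lambda>(a,c). F a c))"
    by (simp add: bij_betw_same_card)
  also have "\<dots> = (\<Sum>(a,c)\<in>A. card (F a c))"
    using assms by (subst card_SigmaI) (auto simp: split_def)
  finally show ?thesis .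
qed

locale circ_interval =
  fixes V :: "'a set" and E :: "'a \<Rightarrow> 'a \<Rightarrow> bool" and pos :: "'a \<Rightarrow> nat"
  assumes finite_V: "finite V"
    and edge_in: "\<And>u v. E u v \<Longrightarrow> u \<in> V \<and> v \<in> V \<and> u \<noteq> v"
    and pos_bij: "bij_betw pos V {0..<card V}"
    and interval: "\<And>u v w. u \<in> V \<Longrightarrow> v \<in> V \<Longrightarrow> w \<in> V \<Longrightarrow> u \<noteq> v \<Longrightarrow> v \<noteq> w \<Longrightarrow> u \<noteq> w
       \<Longrightarrow> cyclic_order (pos u) (pos v) (pos w) \<Longrightarrow> E u w \<Longrightarrow> E u v \<and> E v w"
    and asym: "\<And>u v. E u v \<Longrightarrow> \<not> E v u"
begin

abbreviation n where "n \<equiv> card V"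

definition adj where "adj u w \<longleftrightarrow> E u w \<or> E w u"

lemma adj_sym: "adj x y = adj y x"
  unfolding adj_def by blast

lemma not_adj_self: "\<not> adj a a"
  unfolding adj_def using edge_in by blast

lemma pos_lt: "u \<in> V \<Longrightarrow> pos u < n"
  using pos_bij unfolding bij_betw_def by auto

lemma pos_inj: "u \<in> V \<Longrightarrow> w \<in> V \<Longrightarrow> pos u = pos w \<Longrightarrow> u = w"
  using pos_bij unfolding bij_betw_def inj_on_def by auto

lemma pos_neq: "u \<in> V \<Longrightarrow> w \<in> V \<Longrightarrow> u \<noteq> w \<Longrightarrow> pos u \<noteq> pos w"
  using pos_inj by blast

definition cwd :: "'a \<Rightarrow> 'a \<Rightarrow> nat" where
  "cwd u w = (pos w + n - pos u) mod n"

lemma cwd_eq: assumes "u \<in> V" "w \<in> V"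
  shows "cwd u w = (if pos u \<le> pos w then pos w - pos u else pos w + n - pos u)"
proof (cases "pos u \<le> pos w")
  case True
  have "pos w < n" using pos_lt assms by auto
  then have "((pos w - pos u) + n) mod n = pos w - pos u" by simp
  then show ?thesis unfolding cwd_def using True by (simp add: add.commute le_add_diff)
next
  case False
  then show ?thesis unfolding cwd_def using pos_lt[OF assms(1)] by simp
qed

lemma cwd_lt: assumes "u \<in> V" shows "cwd u w < n"
  unfolding cwd_def using pos_lt[OF assms] by simp

lemma cwd_self: "cwd u u = 0"
  unfolding cwd_def by simp

lemma cwd_pos: assumes "u \<in> V" "w \<in> V" "u \<noteq> w" shows "0 < cwd u w"
proof -
  have "pos u < n" "pos w < n" "pos u \<noteq> pos w" using pos_lt pos_neq assms by auto
  then show ?thesis unfolding cwd_eq[OF assms(1,2)] by auto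
qed

lemma cwd_sum: assumes "u \<in> V" "w \<in> V" "u \<noteq> w" shows "cwd u w + cwd w u = n"
proof -
  have "pos u < n" "pos w < n" "pos u \<noteq> pos w" using pos_lt pos_neq assms by auto
  then show ?thesis unfolding cwd_eq[OF assms(1,2)] cwd_eq[OF assms(2,1)] by auto
qed

lemma cyclic_order_cwd: assumes "u \<in> V" "v \<in> V" "w \<in> V" "u \<noteq> v" "v \<noteq> w" "u \<noteq> w"
  shows "cyclic_order (pos u) (pos v) (pos w) \<longleftrightarrow> cwd u v < cwd u w"
proof -
  have "pos u < n" "pos w < n" "pos v < n" "pos u \<noteq> pos w" "pos u \<noteq> pos v" "pos v \<noteq> pos w"
    using pos_lt pos_neq assms by auto
  then show ?thesis unfolding cwd_eq[OF assms(1,2)] cwd_eq[OF assms(1,3)] cyclic_order_def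
    by auto
qed

lemma cwd_add: assumes "u \<in> V" "v \<in> V" "w \<in> V" "u \<noteq> v" "v \<noteq> w" "u \<noteq> w" "cwd u v < cwd u w"
  shows "cwd u v + cwd v w = cwd u w"
proof -
  have "pos u < n" "pos w < n" "pos v < n" "pos u \<noteq> pos w" "pos u \<noteq> pos v" "pos v \<noteq> pos w"
    using pos_lt pos_neq assms by auto
  then show ?thesis using assms(7)
    unfolding cwd_eq[OF assms(1,2)] cwd_eq[OF assms(1,3)] cwd_eq[OF assms(2,3)]
    by (auto split: if_splits)
qed

lemma cwd_inj_right: assumes "u \<in> V" "w1 \<in> V" "w2 \<in> V" "cwd u w1 = cwd u w2" shows "w1 = w2"
proof -
  have "pos u < n" "pos w1 < n" "pos w2 < n" using pos_lt assms by auto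
  then have "pos w1 = pos w2" using assms(4) unfolding cwd_eq[OF assms(1,2)] cwd_eq[OF assms(1,3)]
    by (auto split: if_splits)
  then show ?thesis using pos_inj assms by auto
qed

lemma cwd_inj_left: assumes "u \<in> V" "w1 \<in> V" "w2 \<in> V" "cwd w1 u = cwd w2 u" shows "w1 = w2"
proof -
  have "pos u < n" "pos w1 < n" "pos w2 < n" using pos_lt assms by auto
  then have "pos w1 = pos w2" using assms(4) unfolding cwd_eq[OF assms(2,1)] cwd_eq[OF assms(3,1)]
    by (auto split: if_splits)
  then show ?thesis using pos_inj assms by auto
qed

lemma cwd_surj: assumes "u \<in> V" "k < n" shows "\<exists>w\<in>V. cwd u w = k"
proof -
  define t where "t = (if pos u + k < n then pos u + k else pos u + k - n)"
  have pu: "pos u < n" using pos_lt assms by auto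
  then have "t \<in> {0..<n}" unfolding t_def using assms by auto
  then obtain w where wV: "w \<in> V" and pw: "pos w = t"
    using pos_bij unfolding bij_betw_def by (metis imageE)
  have "cwd u w = k" unfolding cwd_eq[OF assms(1) wV] pw t_def using pu assms by auto
  then show ?thesis using wV by blast
qed

subsection \<open>Neighbourhoods are arcs\<close>

definition out_nbrs where "out_nbrs u = {w \<in> V. E u w}"
definition in_nbrs where "in_nbrs u = {w \<in> V. E w u}"
definition non_nbrs where "non_nbrs u = {x \<in> V. x \<noteq> u \<and> \<not> adj u x}"
definition outdeg where "outdeg u = card (out_nbrs u)"
definition indeg where "indeg u = card (in_nbrs u)"
definition nondeg where "nondeg u = card (non_nbrs u)"

lemma finite_out_nbrs: "finite (out_nbrs u)" unfolding out_nbrs_def using finite_V by simp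
lemma finite_in_nbrs: "finite (in_nbrs u)" unfolding in_nbrs_def using finite_V by simp
lemma finite_non_nbrs: "finite (non_nbrs u)" unfolding non_nbrs_def using finite_V by simp

lemma out_nbrs_arc: assumes uV: "u \<in> V" shows "cwd u ` out_nbrs u = {1..outdeg u}"
proof -
  let ?D = "cwd u ` out_nbrs u"
  have inj: "inj_on (cwd u) (out_nbrs u)"
    unfolding inj_on_def out_nbrs_def using cwd_inj_right[OF uV] by blast
  have pos: "1 \<le> k" if k: "k \<in> ?D" for k
  proof -
    obtain x where "x \<in> V" "E u x" "k = cwd u x" using k unfolding out_nbrs_def by blast
    then show ?thesis using cwd_pos[OF uV, of x] edge_in[of u x] by simp
  qed
  have down: "j \<in> ?D" if k: "k \<in> ?D" and j: "1 \<le> j" "j < k" for k j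
  proof -
    obtain x where xV: "x \<in> V" and Ex: "E u x" and kx: "k = cwd u x"
      using k unfolding out_nbrs_def by blast
    have "j < n" using j kx cwd_lt[OF uV, of x] by simp
    then obtain y where yV: "y \<in> V" and dy: "cwd u y = j" using cwd_surj[OF uV] by blast
    have uy: "u \<noteq> y" using dy j cwd_self by auto
    have yx: "y \<noteq> x" using dy kx j by auto
    have ux: "u \<noteq> x" using edge_in Ex by blast
    have "cyclic_order (pos u) (pos y) (pos x)"
      using cyclic_order_cwd[OF uV yV xV uy yx ux] dy kx j by simp
    then have "E u y" using interval[OF uV yV xV uy yx ux _ Ex] by blast
    then show ?thesis using dy yV unfolding out_nbrs_def by blast
  qed
  have "card ?D = outdeg u" unfolding outdeg_def using card_image[OF inj] .
  then show ?thesis using downward_closed_eq_interval[OF _ pos down] finite_out_nbrs by simp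
qed

lemma in_nbrs_arc: assumes uV: "u \<in> V" shows "(\<lambda>x. cwd x u) ` in_nbrs u = {1..indeg u}"
proof -
  let ?D = "(\<lambda>x. cwd x u) ` in_nbrs u"
  have inj: "inj_on (\<lambda>x. cwd x u) (in_nbrs u)"
    unfolding inj_on_def in_nbrs_def using cwd_inj_left[OF uV] by blast
  have pos: "1 \<le> k" if k: "k \<in> ?D" for k
  proof -
    obtain x where "x \<in> V" "E x u" "k = cwd x u" using k unfolding in_nbrs_def by blast
    then show ?thesis using cwd_pos[OF _ uV, of x] edge_in[of x u] by simp
  qed
  have down: "j \<in> ?D" if k: "k \<in> ?D" and j: "1 \<le> j" "j < k" for k j
  proof -
    obtain x where xV: "x \<in> V" and Ex: "E x u" and kx: "k = cwd x u"
      using k unfolding in_nbrs_def by blast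
    have ux: "u \<noteq> x" using edge_in Ex by blast
    have kn: "k < n" using kx cwd_lt[OF xV] by simp
    have "n - j < n" using j kn by simp
    then obtain y where yV: "y \<in> V" and dy: "cwd u y = n - j" using cwd_surj[OF uV] by blast
    have uy: "u \<noteq> y" using dy j kn cwd_self by auto
    have dyu: "cwd y u = j" using cwd_sum[OF uV yV uy] dy j kn by simp
    have yx: "y \<noteq> x" using dyu kx j by auto
    have dxu: "cwd u x = n - k" using cwd_sum[OF uV xV ux] kx by simp
    have "cyclic_order (pos u) (pos x) (pos y)"
      using cyclic_order_cwd[OF uV xV yV ux yx[symmetric] uy] dy dxu j kn by simp
    then have "cyclic_order (pos x) (pos y) (pos u)" by (rule cyclic_order_rotate)
    then have "E y u" using interval[OF xV yV uV yx[symmetric] uy[symmetric] ux[symmetric] _ Ex] by blast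
    then show ?thesis using dyu yV unfolding in_nbrs_def by blast
  qed
  have "card ?D = indeg u" unfolding indeg_def using card_image[OF inj] .
  then show ?thesis using downward_closed_eq_interval[OF _ pos down] finite_in_nbrs by simp
qed

lemma out_char: assumes uV: "u \<in> V" and wV: "w \<in> V"
  shows "E u w \<longleftrightarrow> 0 < cwd u w \<and> cwd u w \<le> outdeg u"
proof -
  have "E u w \<longleftrightarrow> cwd u w \<in> cwd u ` out_nbrs u"
    using wV cwd_inj_right[OF uV] unfolding out_nbrs_def by auto
  then show ?thesis unfolding out_nbrs_arc[OF uV] by auto
qed

lemma in_char: assumes uV: "u \<in> V" and wV: "w \<in> V"
  shows "E w u \<longleftrightarrow> 0 < cwd w u \<and> cwd w u \<le> indeg u"
proof -
  have "E w u \<longleftrightarrow> cwd w u \<in> (\<lambda>x. cwd x u) ` in_nbrs u"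
    using wV cwd_inj_left[OF uV] unfolding in_nbrs_def by auto
  then show ?thesis unfolding in_nbrs_arc[OF uV] by auto
qed

lemma degree_sum: assumes uV: "u \<in> V" shows "indeg u + outdeg u + nondeg u + 1 = n"
proof -
  have eqV: "V = insert u (out_nbrs u \<union> in_nbrs u \<union> non_nbrs u)"
    unfolding out_nbrs_def in_nbrs_def non_nbrs_def adj_def using uV by auto
  have d1: "out_nbrs u \<inter> in_nbrs u = {}" unfolding out_nbrs_def in_nbrs_def using asym by auto
  have d2: "(out_nbrs u \<union> in_nbrs u) \<inter> non_nbrs u = {}"
    unfolding out_nbrs_def in_nbrs_def non_nbrs_def adj_def by auto
  have nu: "u \<notin> out_nbrs u \<union> in_nbrs u \<union> non_nbrs u"
    unfolding out_nbrs_def in_nbrs_def non_nbrs_def using edge_in by auto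
  have "n = Suc (card (out_nbrs u \<union> in_nbrs u \<union> non_nbrs u))"
    using eqV nu finite_out_nbrs finite_in_nbrs finite_non_nbrs
    by (metis card_insert_disjoint finite_Un)
  also have "\<dots> = Suc (card (out_nbrs u) + card (in_nbrs u) + card (non_nbrs u))"
    using d1 d2 finite_out_nbrs finite_in_nbrs finite_non_nbrs by (simp add: card_Un_disjoint)
  finally show ?thesis unfolding indeg_def outdeg_def nondeg_def by simp
qed

lemma no_in_star: assumes "E a b" "E c b" "a \<noteq> c" shows "adj a c"
proof -
  have V: "a \<in> V" "b \<in> V" "c \<in> V" and ne: "a \<noteq> b" "c \<noteq> b" using edge_in assms(1,2) by auto
  have pn: "pos a \<noteq> pos c" "pos c \<noteq> pos b" "pos a \<noteq> pos b" using pos_neq V ne assms(3) by auto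
  show ?thesis
  proof (cases "cyclic_order (pos a) (pos c) (pos b)")
    case True
    then have "E a c" using interval[OF V(1) V(3) V(2) assms(3) ne(2) ne(1) _ assms(1)] by blast
    then show ?thesis unfolding adj_def by blast
  next
    case False
    then have "cyclic_order (pos a) (pos b) (pos c)" using cyclic_order_cases pn by blast
    then have "cyclic_order (pos c) (pos a) (pos b)" using cyclic_order_rotate by blast
    then have "E c a" using interval[OF V(3) V(1) V(2) assms(3)[symmetric] ne(1) ne(2) _ assms(2)] by blast
    then show ?thesis unfolding adj_def by blast
  qed
qed

lemma no_out_star: assumes "E b a" "E b c" "a \<noteq> c" shows "adj a c"
proof -
  have V: "a \<in> V" "b \<in> V" "c \<in> V" and ne: "b \<noteq> a" "b \<noteq> c" using edge_in assms(1,2) by auto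
  have pn: "pos a \<noteq> pos c" "pos b \<noteq> pos c" "pos b \<noteq> pos a" using pos_neq V ne assms(3) by auto
  show ?thesis
  proof (cases "cyclic_order (pos b) (pos a) (pos c)")
    case True
    then have "E a c" using interval[OF V(2) V(1) V(3) ne(1) assms(3) ne(2) _ assms(2)] by blast
    then show ?thesis unfolding adj_def by blast
  next
    case False
    then have "cyclic_order (pos b) (pos c) (pos a)" using cyclic_order_cases pn by metis
    then have "E c a" using interval[OF V(2) V(3) V(1) ne(2) assms(3)[symmetric] ne(1) _ assms(1)] by blast
    then show ?thesis unfolding adj_def by blast
  qed
qed

lemma wedge_orientation:
  assumes "a \<noteq> c" "\<not> adj a c" "adj a b" "adj c b"
  shows "(E a b \<and> E b c) \<or> (E b a \<and> E c b)"
proof -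
  have "\<not> (E a b \<and> E c b)" "\<not> (E b a \<and> E b c)"
    using no_in_star[of a b c] no_out_star[of b a c] assms(1,2) by blast+
  then show ?thesis using assms(3,4) unfolding adj_def by blast
qed

subsection \<open>Double counting induced paths\<close>

definition common_nbrs where "common_nbrs a c = {b \<in> V. adj a b \<and> adj c b}"

definition nonadj where "nonadj = Sigma V non_nbrs"

definition wedges where "wedges = {(a,b,c). (a,c) \<in> nonadj \<and> b \<in> common_nbrs a c}"

definition indep3 where "indep3 x y z \<longleftrightarrow> x \<in> V \<and> y \<in> V \<and> z \<in> V \<and> x \<noteq> y \<and> y \<noteq> z \<and> x \<noteq> z
   \<and> \<not> adj x y \<and> \<not> adj y z \<and> \<not> adj x z"

definition indep_triples where "indep_triples = {(x,y,z). indep3 x y z}"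

lemma nonadj_iff: "(a,c) \<in> nonadj \<longleftrightarrow> a \<in> V \<and> c \<in> V \<and> a \<noteq> c \<and> \<not> adj a c"
  unfolding nonadj_def non_nbrs_def by auto

lemma finite_nonadj: "finite nonadj"
  unfolding nonadj_def using finite_V finite_non_nbrs by auto

lemma finite_indep_triples: "finite indep_triples"
  by (rule finite_subset[of _ "V \<times> V \<times> V"]) (auto simp: indep_triples_def indep3_def finite_V)

lemma finite_common_nbrs: "finite (common_nbrs a c)"
  unfolding common_nbrs_def using finite_V by auto

lemma card_wedges: "card wedges = (\<Sum>(a,c)\<in>nonadj. card (common_nbrs a c))"
  unfolding wedges_def using finite_nonadj finite_common_nbrs by (rule card_triples_by_ends)

lemma card_indep_triples:
  "card indep_triples = (\<Sum>(a,c)\<in>nonadj. card (non_nbrs a \<inter> non_nbrs c))"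
proof -
  have "indep_triples = {(a,b,c). (a,c) \<in> nonadj \<and> b \<in> non_nbrs a \<inter> non_nbrs c}"
    unfolding indep_triples_def indep3_def nonadj_iff non_nbrs_def using adj_sym by auto
  also have "card \<dots> = (\<Sum>(a,c)\<in>nonadj. card (non_nbrs a \<inter> non_nbrs c))"
    using finite_nonadj finite_non_nbrs by (intro card_triples_by_ends) auto
  finally show ?thesis .
qed

(* Every wedge is an induced path read forwards or backwards, and not both (2-freeness). *)
lemma card_wedges_P3: "card wedges = 2 * P3_count V E"
proof -
  let ?P = "induced_P3 V E"
  let ?rev = "\<lambda>(a,b,c). (c,b,a)"
  have fin: "finite ?P"
    using finite_subset[of ?P "V \<times> V \<times> V"] finite_V unfolding induced_P3_def by auto
  have "wedges \<subseteq> ?P \<union> ?rev ` ?P"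
  proof
    fix t assume t: "t \<in> wedges"
    obtain a b c where tt: "t = (a,b,c)" by (cases t)
    have h: "a \<in> V" "b \<in> V" "c \<in> V" "a \<noteq> c" "\<not> adj a c" "adj a b" "adj c b"
      using t unfolding tt wedges_def common_nbrs_def nonadj_iff by auto
    then have "(a,b,c) \<in> ?P \<or> (c,b,a) \<in> ?P"
      using wedge_orientation[of a c b] edge_in unfolding induced_P3_def adj_def by auto
    then show "t \<in> ?P \<union> ?rev ` ?P" unfolding tt by (auto intro: rev_image_eqI)
  qed
  moreover have "?P \<union> ?rev ` ?P \<subseteq> wedges"
    unfolding wedges_def induced_P3_def nonadj_iff common_nbrs_def adj_def by auto
  ultimately have eq: "wedges = ?P \<union> ?rev ` ?P" by blast
  have disj: "?P \<inter> ?rev ` ?P = {}"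
    unfolding induced_P3_def using asym by auto
  have "card (?rev ` ?P) = card ?P" by (rule card_image) (auto simp: inj_on_def)
  then show ?thesis unfolding eq P3_count_def using fin disj by (simp add: card_Un_disjoint)
qed

(* Inclusion-exclusion: the common neighbours of a non-adjacent pair are what remains after
   removing the non-neighbours of either vertex. *)
lemma card_common_nbrs: assumes ac: "(a,c) \<in> nonadj"
  shows "card (common_nbrs a c) + nondeg a + nondeg c = n + card (non_nbrs a \<inter> non_nbrs c)"
proof -
  have aV: "a \<in> V" and cV: "c \<in> V" and ne: "a \<noteq> c" and na: "\<not> adj a c" using ac nonadj_iff by auto
  define Na where "Na = insert a (non_nbrs a)"
  define Nc where "Nc = insert c (non_nbrs c)"
  have fin: "finite Na" "finite Nc" unfolding Na_def Nc_def using finite_non_nbrs by auto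
  have cNa: "card Na = nondeg a + 1" "card Nc = nondeg c + 1"
    unfolding Na_def Nc_def nondeg_def using finite_non_nbrs by (simp_all add: non_nbrs_def)
  have Veq: "V = common_nbrs a c \<union> (Na \<union> Nc)" and dj: "common_nbrs a c \<inter> (Na \<union> Nc) = {}"
    unfolding common_nbrs_def Na_def Nc_def non_nbrs_def using aV cV not_adj_self by auto
  have "Na \<inter> Nc = insert a (insert c (non_nbrs a \<inter> non_nbrs c))"
    unfolding Na_def Nc_def using ne na aV cV by (auto simp: non_nbrs_def adj_sym)
  then have cInt: "card (Na \<inter> Nc) = card (non_nbrs a \<inter> non_nbrs c) + 2"
    using ne finite_non_nbrs by (simp add: non_nbrs_def)
  have "n = card (common_nbrs a c) + card (Na \<union> Nc)"
    using Veq dj finite_common_nbrs fin by (metis card_Un_disjoint finite_Un)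
  moreover have "card (Na \<union> Nc) + card (Na \<inter> Nc) = card Na + card Nc"
    using card_Un_Int[OF fin] by simp
  ultimately show ?thesis using cNa cInt by simp
qed

lemma sum_nonadj_fst: "(\<Sum>(a,c)\<in>nonadj. f a) = (\<Sum>a\<in>V. of_nat (nondeg a) * f a)"
proof -
  have "(\<Sum>(a,c)\<in>nonadj. f a) = (\<Sum>a\<in>V. \<Sum>c\<in>non_nbrs a. f a)"
    unfolding nonadj_def using finite_V finite_non_nbrs by (subst sum.Sigma) auto
  then show ?thesis unfolding nondeg_def by simp
qed

lemma sum_nonadj_snd: "(\<Sum>(a,c)\<in>nonadj. f c) = (\<Sum>(a,c)\<in>nonadj. f a)"
proof -
  have swap: "(\<lambda>(a,c). (c,a)) ` nonadj = nonadj"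
    by (auto simp: image_iff nonadj_iff adj_sym)
  have "(\<Sum>(a,c)\<in>nonadj. f a) = (\<Sum>(a,c)\<in>(\<lambda>(a,c). (c,a)) ` nonadj. f a)" using swap by simp
  also have "\<dots> = (\<Sum>(a,c)\<in>nonadj. f c)" by (subst sum.reindex) (auto simp: inj_on_def split_def)
  finally show ?thesis by simp
qed

lemma P3_identity:
  "2 * int (P3_count V E) = int n * (\<Sum>a\<in>V. int (nondeg a)) + int (card indep_triples)
                            - 2 * (\<Sum>a\<in>V. int (nondeg a) * int (nondeg a))"
proof -
  have "2 * int (P3_count V E) = (\<Sum>(a,c)\<in>nonadj. int (card (common_nbrs a c)))"
    using card_wedges_P3 unfolding card_wedges by (simp add: of_nat_sum[symmetric] split_def)
  also have "\<dots> = (\<Sum>(a,c)\<in>nonadj. int n + int (card (non_nbrs a \<inter> non_nbrs c))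
                                    - int (nondeg a) - int (nondeg c))"
    by (rule sum.cong) (auto simp: algebra_simps dest!: card_common_nbrs)
  also have "\<dots> = (\<Sum>(a,c)\<in>nonadj. int n) + (\<Sum>(a,c)\<in>nonadj. int (card (non_nbrs a \<inter> non_nbrs c)))
                 - (\<Sum>(a,c)\<in>nonadj. int (nondeg a)) - (\<Sum>(a,c)\<in>nonadj. int (nondeg c))"
    by (simp add: sum.distrib sum_subtractf split_def)
  also have "(\<Sum>(a,c)\<in>nonadj. int (nondeg c)) = (\<Sum>(a,c)\<in>nonadj. int (nondeg a))"
    by (rule sum_nonadj_snd)
  also have "(\<Sum>(a,c)\<in>nonadj. int (nondeg a)) = (\<Sum>a\<in>V. int (nondeg a) * int (nondeg a))"
    by (rule sum_nonadj_fst)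
  also have "(\<Sum>(a,c)\<in>nonadj. int n) = (\<Sum>a\<in>V. int (nondeg a) * int n)"
    by (rule sum_nonadj_fst)
  also have "(\<Sum>(a,c)\<in>nonadj. int (card (non_nbrs a \<inter> non_nbrs c))) = int (card indep_triples)"
    unfolding card_indep_triples by (simp add: of_nat_sum split_def)
  finally show ?thesis by (simp add: sum_distrib_left mult.commute sum_negf)
qed

subsection \<open>Independent triples and their apex\<close>

(* Length of the arc between y and z that avoids x. *)
definition gap where "gap x y z = (if cwd x y < cwd x z then cwd y z else cwd z y)"

lemma gap_commute: assumes "x \<in> V" "y \<in> V" "z \<in> V" "y \<noteq> z" shows "gap x y z = gap x z y"
proof -
  have "cwd x y \<noteq> cwd x z" using cwd_inj_right[OF assms(1,2,3)] assms(4) by blast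
  then show ?thesis unfolding gap_def by auto
qed

(* Triples whose apex (the vertex opposite a longest arc, ties broken towards the earlier
   position) is the first, second or third entry. *)
definition apex1 where "apex1 = {(x1,x2,x3). indep3 x1 x2 x3
   \<and> gap x2 x3 x1 \<le> gap x1 x2 x3 \<and> gap x3 x1 x2 \<le> gap x1 x2 x3}"
definition apex2 where "apex2 = {(x1,x2,x3). indep3 x1 x2 x3
   \<and> gap x1 x3 x2 + 1 \<le> gap x2 x1 x3 \<and> gap x3 x2 x1 \<le> gap x2 x1 x3}"
definition apex3 where "apex3 = {(x1,x2,x3). indep3 x1 x2 x3
   \<and> gap x1 x2 x3 + 1 \<le> gap x3 x1 x2 \<and> gap x2 x3 x1 + 1 \<le> gap x3 x1 x2}"

lemma indep_triples_cover: "indep_triples \<subseteq> apex1 \<union> apex2 \<union> apex3"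
proof
  fix t assume "t \<in> indep_triples"
  then obtain x1 x2 x3 where t: "t = (x1,x2,x3)" and ind: "indep3 x1 x2 x3"
    unfolding indep_triples_def by auto
  have V: "x1 \<in> V" "x2 \<in> V" "x3 \<in> V" "x1 \<noteq> x2" "x2 \<noteq> x3" "x1 \<noteq> x3"
    using ind unfolding indep3_def by auto
  have "gap x1 x3 x2 = gap x1 x2 x3" "gap x2 x1 x3 = gap x2 x3 x1" "gap x3 x2 x1 = gap x3 x1 x2"
    using gap_commute V by auto
  then show "t \<in> apex1 \<union> apex2 \<union> apex3"
    unfolding t apex1_def apex2_def apex3_def using ind by auto
qed

(* The pairs completing v to an independent triple with apex v; the slacks e1, e2 encode
   the tie-breaking of the three classes above. *)
definition apex_pairs where "apex_pairs v e1 e2 = {(y,z). indep3 v y z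
   \<and> gap y z v + e1 \<le> gap v y z \<and> gap z v y + e2 \<le> gap v y z}"

lemma finite_apex_pairs: "finite (apex_pairs v e1 e2)"
  by (rule finite_subset[of _ "V \<times> V"]) (auto simp: apex_pairs_def indep3_def finite_V)

lemma card_by_apex:
  assumes "bij_betw f (Sigma V (\<lambda>v. apex_pairs v e1 e2)) I"
  shows "card I = (\<Sum>v\<in>V. card (apex_pairs v e1 e2))"
  using bij_betw_same_card[OF assms] finite_V finite_apex_pairs by simp

lemma card_apex1: "card apex1 = (\<Sum>v\<in>V. card (apex_pairs v 0 0))"
  by (rule card_by_apex[where f="\<lambda>(v,(y,z)). (v,y,z)"],
      rule bij_betw_byWitness[where f'="\<lambda>(v,y,z). (v,(y,z))"])
     (auto simp: apex1_def apex_pairs_def indep3_def)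

lemma card_apex2: "card apex2 = (\<Sum>v\<in>V. card (apex_pairs v 1 0))"
  by (rule card_by_apex[where f="\<lambda>(v,(y,z)). (y,v,z)"],
      rule bij_betw_byWitness[where f'="\<lambda>(y,v,z). (v,(y,z))"])
     (auto simp: apex2_def apex_pairs_def indep3_def adj_sym)

lemma card_apex3: "card apex3 = (\<Sum>v\<in>V. card (apex_pairs v 1 1))"
  by (rule card_by_apex[where f="\<lambda>(v,(y,z)). (y,z,v)"],
      rule bij_betw_byWitness[where f'="\<lambda>(y,z,v). (v,(y,z))"])
     (auto simp: apex3_def apex_pairs_def indep3_def adj_sym)

definition apex_pairs_cw where "apex_pairs_cw v e1 e2 = {(y,z) \<in> apex_pairs v e1 e2. cwd v y < cwd v z}"

lemma apex_pairs_split: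
  assumes vV: "v \<in> V"
  shows "apex_pairs v e1 e2 \<subseteq> apex_pairs_cw v e1 e2 \<union> (\<lambda>(y,z). (z,y)) ` apex_pairs_cw v e2 e1"
proof
  fix x assume x: "x \<in> apex_pairs v e1 e2"
  obtain y z where xx: "x = (y,z)" by (cases x)
  have ind: "indep3 v y z" and c: "gap y z v + e1 \<le> gap v y z" "gap z v y + e2 \<le> gap v y z"
    using x unfolding xx apex_pairs_def by auto
  have V: "y \<in> V" "z \<in> V" "y \<noteq> z" "v \<noteq> y" "v \<noteq> z" using ind unfolding indep3_def by auto
  have "cwd v y \<noteq> cwd v z" using cwd_inj_right[OF vV V(1,2)] V(3) by blast
  moreover have "(z,y) \<in> apex_pairs v e2 e1"
    using ind c gap_commute[OF vV V(1,2)] gap_commute[OF V(1) vV V(2)] gap_commute[OF V(2) vV V(1)] V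
    unfolding apex_pairs_def indep3_def by (auto simp: adj_sym)
  ultimately show "x \<in> apex_pairs_cw v e1 e2 \<union> (\<lambda>(y,z). (z,y)) ` apex_pairs_cw v e2 e1"
    using x unfolding xx apex_pairs_cw_def by (auto intro: rev_image_eqI)
qed

(* The budgets available to the two free coordinates of a clockwise apex pair. *)
definition room1 where "room1 v = int n - 2 * int (indeg v) - int (outdeg v) - 3"
definition room2 where "room2 v = int n - int (indeg v) - 2 * int (outdeg v) - 3"

lemma apex_pairs_cw_dist:
  assumes yz: "(y,z) \<in> apex_pairs_cw v e1 e2"
  shows "outdeg v + 1 \<le> cwd v y" "indeg v + 1 \<le> cwd z v"
    "2 * cwd z v + cwd v y + e1 \<le> n" "cwd z v + 2 * cwd v y + e2 \<le> n"
proof -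
  have ind: "indep3 v y z" and c1: "gap y z v + e1 \<le> gap v y z" and c2: "gap z v y + e2 \<le> gap v y z"
    and lt: "cwd v y < cwd v z"
    using yz unfolding apex_pairs_cw_def apex_pairs_def by auto
  have vV: "v \<in> V" and yV: "y \<in> V" and zV: "z \<in> V" and vy: "v \<noteq> y" and yz': "y \<noteq> z"
    and vz: "v \<noteq> z" and nvy: "\<not> adj v y" and nvz: "\<not> adj v z"
    using ind unfolding indep3_def by auto
  have "\<not> E v y" using nvy unfolding adj_def by blast
  then show "outdeg v + 1 \<le> cwd v y" using out_char[OF vV yV] cwd_pos[OF vV yV vy] by simp
  have "\<not> E z v" using nvz unfolding adj_def by blast
  then show "indeg v + 1 \<le> cwd z v" using in_char[OF vV zV] cwd_pos[OF zV vV] vz by simp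
  have t1: "cwd v y + cwd y z = cwd v z" using cwd_add[OF vV yV zV vy yz' vz lt] .
  have s1: "cwd v z + cwd z v = n" using cwd_sum[OF vV zV vz] .
  have s2: "cwd v y + cwd y v = n" using cwd_sum[OF vV yV vy] .
  have s3: "cwd y z + cwd z y = n" using cwd_sum[OF yV zV yz'] .
  have g1: "gap v y z = cwd y z" unfolding gap_def using lt by simp
  have "cwd y z < cwd y v" using t1 s2 cwd_lt[OF vV, of z] by simp
  then have g2: "gap y z v = cwd z v" unfolding gap_def by simp
  have "cwd z v < cwd z y" using t1 s1 s3 cwd_pos[OF vV yV vy] by simp
  then have g3: "gap z v y = cwd v y" unfolding gap_def by simp
  show "2 * cwd z v + cwd v y + e1 \<le> n" using c1 g1 g2 t1 s1 by simp
  show "cwd z v + 2 * cwd v y + e2 \<le> n" using c2 g1 g3 t1 s1 by simp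
qed

(* Clockwise apex pairs inject into a lattice triangle via their distances to v. *)
lemma card_apex_pairs_cw_le:
  assumes vV: "v \<in> V"
  shows "card (apex_pairs_cw v e1 e2) \<le> tri_card (room1 v - int e1) (room2 v - int e2)"
proof -
  let ?phi = "\<lambda>(y,z). (cwd z v - indeg v - 1, cwd v y - outdeg v - 1)"
  have sub: "?phi ` apex_pairs_cw v e1 e2 \<subseteq> tri_pts (room1 v - int e1) (room2 v - int e2)"
    using apex_pairs_cw_dist by (fastforce simp: tri_pts_def room1_def room2_def)
  have inj: "inj_on ?phi (apex_pairs_cw v e1 e2)"
  proof (rule inj_onI)
    fix a b assume a: "a \<in> apex_pairs_cw v e1 e2" and b: "b \<in> apex_pairs_cw v e1 e2"
      and eq: "?phi a = ?phi b"
    obtain y z y' z' where ab: "a = (y,z)" "b = (y',z')" by (cases a, cases b)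
    note fa = apex_pairs_cw_dist[OF a[unfolded ab]] and fb = apex_pairs_cw_dist[OF b[unfolded ab]]
    have V: "y \<in> V" "z \<in> V" "y' \<in> V" "z' \<in> V"
      using a b unfolding ab apex_pairs_cw_def apex_pairs_def indep3_def by auto
    have "cwd v y = cwd v y'" "cwd z v = cwd z' v" using eq fa fb unfolding ab by auto
    then show "a = b" unfolding ab using cwd_inj_right[OF vV V(1,3)] cwd_inj_left[OF vV V(2,4)] by auto
  qed
  have "card (apex_pairs_cw v e1 e2) = card (?phi ` apex_pairs_cw v e1 e2)" using card_image[OF inj] by simp
  also have "\<dots> \<le> tri_card (room1 v - int e1) (room2 v - int e2)"
    unfolding tri_card_def by (rule card_mono[OF finite_tri_pts sub])
  finally show ?thesis .
qed

lemma card_apex_pairs_le: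
  assumes vV: "v \<in> V"
  shows "card (apex_pairs v e1 e2)
         \<le> tri_card (room1 v - int e1) (room2 v - int e2) + tri_card (room1 v - int e2) (room2 v - int e1)"
proof -
  have fin: "finite (apex_pairs_cw v e1 e2)" "finite (apex_pairs_cw v e2 e1)"
    unfolding apex_pairs_cw_def using finite_apex_pairs by (auto intro: finite_subset[rotated])
  have "card (apex_pairs v e1 e2)
        \<le> card (apex_pairs_cw v e1 e2 \<union> (\<lambda>(y,z). (z,y)) ` apex_pairs_cw v e2 e1)"
    using apex_pairs_split[OF vV] fin by (intro card_mono) auto
  also have "\<dots> \<le> card (apex_pairs_cw v e1 e2) + card (apex_pairs_cw v e2 e1)"
    using card_Un_le card_image_le[OF fin(2)] by (meson add_left_mono order_trans)
  finally show ?thesis using card_apex_pairs_cw_le[OF vV, of e1 e2] card_apex_pairs_cw_le[OF vV, of e2 e1]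
    by linarith
qed

lemma card_indep_triples_le: "int (card indep_triples) \<le> (\<Sum>v\<in>V. tri_sum (room1 v) (room2 v))"
proof -
  have "apex1 \<union> apex2 \<union> apex3 \<subseteq> indep_triples"
    unfolding apex1_def apex2_def apex3_def indep_triples_def by auto
  then have fin: "finite apex1" "finite apex2" "finite apex3"
    using finite_indep_triples by (auto intro: finite_subset)
  have "card indep_triples \<le> card (apex1 \<union> apex2 \<union> apex3)"
    using indep_triples_cover fin by (intro card_mono) auto
  also have "\<dots> \<le> card apex1 + card apex2 + card apex3"
    by (meson add_mono card_Un_le le_refl order_trans)
  also have "\<dots> = (\<Sum>v\<in>V. card (apex_pairs v 0 0) + card (apex_pairs v 1 0) + card (apex_pairs v 1 1))"
    unfolding card_apex1 card_apex2 card_apex3 by (simp add: sum.distrib)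
  finally have "int (card indep_triples)
      \<le> int (\<Sum>v\<in>V. card (apex_pairs v 0 0) + card (apex_pairs v 1 0) + card (apex_pairs v 1 1))"
    by (simp only: of_nat_le_iff)
  also have "\<dots> = (\<Sum>v\<in>V. int (card (apex_pairs v 0 0)) + int (card (apex_pairs v 1 0))
                          + int (card (apex_pairs v 1 1)))"
    by (simp only: of_nat_sum of_nat_add)
  also have "\<dots> \<le> (\<Sum>v\<in>V. tri_sum (room1 v) (room2 v))"
  proof (rule sum_mono)
    fix v assume vV: "v \<in> V"
    show "int (card (apex_pairs v 0 0)) + int (card (apex_pairs v 1 0)) + int (card (apex_pairs v 1 1))
          \<le> tri_sum (room1 v) (room2 v)"
      using card_apex_pairs_le[OF vV, of 0 0] card_apex_pairs_le[OF vV, of 1 0]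
        card_apex_pairs_le[OF vV, of 1 1]
      unfolding tri_sum_def by simp
  qed
  finally show ?thesis .
qed

(* Per-vertex inequality; note room1 v + room2 v + 3 = 3 r - n by degree_sum. *)
lemma vertex_bound:
  assumes vV: "v \<in> V"
  shows "8 * (int n * int (nondeg v) - 2 * int (nondeg v)^2) + 8 * tri_sum (room1 v) (room2 v) \<le> (int n)^2"
proof -
  define r where "r = int (nondeg v)"
  define T where "T = tri_sum (room1 v) (room2 v)"
  have sum3: "room1 v + room2 v + 3 = 3 * r - int n" and r_le: "r \<le> int n"
    using degree_sum[OF vV] unfolding room1_def room2_def r_def by linarith+
  have "8 * (int n * r - 2 * r^2) + 8 * T \<le> (int n)^2"
  proof (cases "T = 0")
    case True
    have "0 \<le> (int n - 4 * r)^2" by simp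
    then show ?thesis using True by (simp add: power2_eq_square algebra_simps)
  next
    case False
    then have "\<not> (room1 v < 0 \<or> room2 v < 0)" using tri_sum_neg unfolding T_def by blast
    then have "int n \<le> 3 * r" using sum3 by simp
    then have "0 \<le> (int n - r) * (3 * r - int n)" using r_le by simp
    then have quad: "0 \<le> 4 * (int n * r) - int n * int n - 3 * (r * r)"
      by (simp add: algebra_simps)
    have "4 * T \<le> (3 * r - int n)^2"
      using tri_sum_bound[of "room1 v" "room2 v"] sum3 unfolding T_def by simp
    then have "8 * T \<le> 18 * (r * r) - 12 * (int n * r) + 2 * (int n * int n)"
      by (simp add: power2_eq_square algebra_simps)
    moreover have "0 \<le> r * r" by simp
    moreover have "8 * (int n * r - 2 * r^2) = 8 * (int n * r) - 16 * (r * r)"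
      by (simp add: power2_eq_square)
    ultimately show ?thesis using quad unfolding power2_eq_square by linarith
  qed
  then show ?thesis unfolding r_def T_def .
qed

lemma P3_bound: "16 * int (P3_count V E) \<le> (int n)^3"
proof -
  have "16 * int (P3_count V E)
        = 8 * (int n * (\<Sum>a\<in>V. int (nondeg a)) + int (card indep_triples)
               - 2 * (\<Sum>a\<in>V. int (nondeg a) * int (nondeg a)))"
    using P3_identity by simp
  also have "\<dots> \<le> 8 * (int n * (\<Sum>a\<in>V. int (nondeg a)) + (\<Sum>v\<in>V. tri_sum (room1 v) (room2 v))
               - 2 * (\<Sum>a\<in>V. int (nondeg a) * int (nondeg a)))"
    using card_indep_triples_le by simp
  also have "\<dots> = (\<Sum>v\<in>V. 8 * (int n * int (nondeg v) - 2 * int (nondeg v)^2)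
                            + 8 * tri_sum (room1 v) (room2 v))"
    by (simp add: sum.distrib sum_distrib_left sum_subtractf power2_eq_square algebra_simps)
  also have "\<dots> \<le> (\<Sum>v\<in>V. (int n)^2)" by (rule sum_mono) (rule vertex_bound)
  also have "\<dots> = (int n)^3" by (simp add: power2_eq_square power3_eq_cube)
  finally show ?thesis .
qed

end

lemma circ_interval_from_defs:
  assumes "circular_interval_digraph V E" "two_free V E"
  obtains pos where "circ_interval V E pos"
proof -
  obtain pos where dg: "digraph V E" and bij: "bij_betw pos V {0..<card V}"
    and circ: "\<forall>u\<in>V. \<forall>v\<in>V. \<forall>w\<in>V. u \<noteq> v \<and> v \<noteq> w \<and> u \<noteq> w \<and>
            cyclic_order (pos u) (pos v) (pos w) \<and> E u w \<longrightarrow> E u v \<and> E v w"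
    using assms(1) unfolding circular_interval_digraph_def by blast
  have "circ_interval V E pos"
    using dg bij circ assms(2) unfolding circ_interval_def digraph_def two_free_def by blast
  then show ?thesis by (rule that)
qed

theorem theorem1:
  fixes V :: "'a set" and E :: "'a \<Rightarrow> 'a \<Rightarrow> bool"
  assumes "circular_interval_digraph V E"
    and "two_free V E"
  shows "real (P3_count V E) \<le> real (card V) ^ 3 / 16"
proof -
  obtain pos where "circ_interval V E pos" using circ_interval_from_defs assms .
  then interpret circ_interval V E pos .
  have "16 * int (P3_count V E) \<le> int (card V) ^ 3" by (rule P3_bound)
  then have "16 * real (P3_count V E) \<le> real (card V) ^ 3"
    by (metis of_int_le_iff of_int_mult of_int_numeral of_int_of_nat_eq of_int_power)
  then show ?thesis by simp
qed

end
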